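(* Let $p\le q$ be positive integers. The complete bipartite graph $K_{p,q}$ is a TRVG with respect to the torus if and only if $p\le 2$ or $(p,q)\in\{(3,3),(3,4),(3,5),(3,6),(4,4)\}$.
   Context: View the torus as an axis-parallel rectangle $[0,W]\times[0,H]$ with opposite sides identified. Horizontal lines $y=c$ and vertical lines $x=c$ are then closed curves on the torus. A graph $G$ is a TRVG with respect to the torus if its vertices can be represented by a collection of pairwise non-overlapping axis-parallel rectangles on this torus (a rectangle may wrap across the identified sides), one per vertex, such that two distinct vertices are adjacent if and only if some horizontal or vertical line of the torus intersects the interiors of both of their rectangles (other rectangles do not block visibility). *)

theory Defs
  imports Complex_Main
begin

definition in_open_arc :: "real \<Rightarrow> real \<Rightarrow> real \<Rightarrow> real \<Rightarrow> bool" where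
  "in_open_arc L a w t \<longleftrightarrow> (\<exists>k::int. a < t + of_int k * L \<and> t + of_int k * L < a + w)"

text \<open>A rectangle on the torus [0,W] x [0,H] is (x0, w, y0, h): it is the product of the
  arc of R/WZ starting at x0 of length w and the arc of R/HZ starting at y0 of length h
  (it may wrap across the identified sides).\<close>
type_synonym trect = "real \<times> real \<times> real \<times> real"

definition valid_trect :: "real \<Rightarrow> real \<Rightarrow> trect \<Rightarrow> bool" where
  "valid_trect W H r = (case r of (x0, w, y0, h) \<Rightarrow> 0 < w \<and> w < W \<and> 0 < h \<and> h < H)"

definition xint :: "real \<Rightarrow> trect \<Rightarrow> real \<Rightarrow> bool" where
  "xint W r t = (case r of (x0, w, y0, h) \<Rightarrow> in_open_arc W x0 w t)"

definition yint :: "real \<Rightarrow> trect \<Rightarrow> real \<Rightarrow> bool" where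
  "yint H r t = (case r of (x0, w, y0, h) \<Rightarrow> in_open_arc H y0 h t)"

definition in_interior :: "real \<Rightarrow> real \<Rightarrow> trect \<Rightarrow> real \<Rightarrow> real \<Rightarrow> bool" where
  "in_interior W H r x y \<longleftrightarrow> xint W r x \<and> yint H r y"

definition non_overlapping :: "real \<Rightarrow> real \<Rightarrow> trect \<Rightarrow> trect \<Rightarrow> bool" where
  "non_overlapping W H r s \<longleftrightarrow> \<not> (\<exists>x y. in_interior W H r x y \<and> in_interior W H s x y)"

definition sees :: "real \<Rightarrow> real \<Rightarrow> trect \<Rightarrow> trect \<Rightarrow> bool" where
  "sees W H r s \<longleftrightarrow> (\<exists>c. yint H r c \<and> yint H s c) \<or> (\<exists>c. xint W r c \<and> xint W s c)"

definition TRVG :: "'a set \<Rightarrow> ('a \<Rightarrow> 'a \<Rightarrow> bool) \<Rightarrow> bool" where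
  "TRVG V E \<longleftrightarrow> (\<exists>W H (R :: 'a \<Rightarrow> trect). 0 < W \<and> 0 < H \<and>
      (\<forall>v\<in>V. valid_trect W H (R v)) \<and>
      (\<forall>u\<in>V. \<forall>v\<in>V. u \<noteq> v \<longrightarrow> non_overlapping W H (R u) (R v)) \<and>
      (\<forall>u\<in>V. \<forall>v\<in>V. u \<noteq> v \<longrightarrow> (E u v \<longleftrightarrow> sees W H (R u) (R v))))"

definition Kpq_V :: "nat \<Rightarrow> nat \<Rightarrow> (nat + nat) set" where
  "Kpq_V p q = Inl ` {..<p} \<union> Inr ` {..<q}"

definition Kpq_E :: "nat + nat \<Rightarrow> nat + nat \<Rightarrow> bool" where
  "Kpq_E u v \<longleftrightarrow> (isl u \<noteq> isl v)"

end

theory Submission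
  imports Defs
begin

(*
  Project a representation onto the two coordinate circles of the torus: two
  rectangles see each other iff their projections meet on at least one circle.
  In K_{p,q} both sides are independent sets, so on each circle the p arcs of one
  side are pairwise disjoint, and so are the q arcs of the other side.  Charge a
  meeting pair of arcs to the start point of one of them that lies in the other;
  disjointness within each side makes this charging injective, so each circle
  carries at most p + q of the pq adjacent pairs.  Hence pq <= 2(p + q), which
  leaves exactly the listed cases.  Conversely, explicit rectangles with integer
  corners represent K_{2,q}, K_{3,6} and K_{4,4}, and representations restrict
  to induced subgraphs.
*)

definition arcs_meet :: "real \<Rightarrow> real \<Rightarrow> real \<Rightarrow> real \<Rightarrow> real \<Rightarrow> bool" where
  "arcs_meet L a w b v \<longleftrightarrow> (\<exists>t. in_open_arc L a w t \<and> in_open_arc L b v t)"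

lemma sees_iff_arcs_meet:
  "sees W H (x, w, y, h) (x', w', y', h') \<longleftrightarrow> arcs_meet W x w x' w' \<or> arcs_meet H y h y' h'"
  unfolding sees_def arcs_meet_def xint_def yint_def by auto

lemma non_overlapping_iff_arcs_meet:
  "non_overlapping W H (x, w, y, h) (x', w', y', h') \<longleftrightarrow>
     \<not> (arcs_meet W x w x' w' \<and> arcs_meet H y h y' h')"
  unfolding non_overlapping_def arcs_meet_def in_interior_def xint_def yint_def by auto

lemma arcs_meet_iff_shift:
  assumes "0 < w" "0 < v"
  shows "arcs_meet L a w b v \<longleftrightarrow>
    (\<exists>k::int. a < b + of_int k * L + v \<and> b + of_int k * L < a + w)"
proof
  assume "arcs_meet L a w b v"
  then obtain t m n where "a < t + of_int m * L" "t + of_int m * L < a + w"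
    "b < t + of_int n * L" "t + of_int n * L < b + v"
    unfolding arcs_meet_def in_open_arc_def by blast
  moreover have "of_int (m - n) * L = of_int m * L - of_int n * L"
    by (simp add: algebra_simps)
  ultimately show "\<exists>k::int. a < b + of_int k * L + v \<and> b + of_int k * L < a + w"
    by (intro exI[of _ "m - n"]) linarith
next
  assume "\<exists>k::int. a < b + of_int k * L + v \<and> b + of_int k * L < a + w"
  then obtain k :: int where k: "a < b + of_int k * L + v" "b + of_int k * L < a + w"
    by blast
  define t where "t = (max a (b + of_int k * L) + min (a + w) (b + of_int k * L + v)) / 2"
  have t: "a < t" "t < a + w" "b + of_int k * L < t" "t < b + of_int k * L + v"
    using k assms by (auto simp: t_def)
  have "in_open_arc L a w t"
    unfolding in_open_arc_def using t by (intro exI[of _ 0]) simp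
  moreover have "in_open_arc L b v t"
    unfolding in_open_arc_def using t by (intro exI[of _ "- k"]) simp
  ultimately show "arcs_meet L a w b v"
    unfolding arcs_meet_def by blast
qed

lemma arcs_meet_if_eventually_at_right:
  assumes "eventually (in_open_arc L a w) (at_right t)"
    and "eventually (in_open_arc L b v) (at_right t)"
  shows "arcs_meet L a w b v"
  using eventually_happens'[OF trivial_limit_at_right_real eventually_conj[OF assms]]
  unfolding arcs_meet_def by blast

lemma arcs_meet_imp_eventually_at_right_start:
  assumes "arcs_meet L a w b v" "0 < w" "0 < v"
  shows "eventually (in_open_arc L b v) (at_right a) \<or>
    eventually (in_open_arc L a w) (at_right b)"
proof -
  obtain k :: int where k: "a < b + of_int k * L + v" "b + of_int k * L < a + w"
    using assms arcs_meet_iff_shift by blast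
  show ?thesis
  proof (cases "b + of_int k * L \<le> a")
    case True
    have "eventually (\<lambda>t. t \<in> {a<..<b + of_int k * L + v}) (at_right a)"
      using k by (intro eventually_at_right_real)
    then have "eventually (in_open_arc L b v) (at_right a)"
      by (rule eventually_mono) (use True in \<open>auto simp: in_open_arc_def intro!: exI[of _ "- k"]\<close>)
    then show ?thesis ..
  next
    case False
    have "eventually (\<lambda>t. t \<in> {b<..<a + w - of_int k * L}) (at_right b)"
      using k by (intro eventually_at_right_real) simp
    then have "eventually (in_open_arc L a w) (at_right b)"
      by (rule eventually_mono) (use False in \<open>auto simp: in_open_arc_def intro!: exI[of _ k]\<close>)
    then show ?thesis ..
  qed
qed

lemma card_meeting_arc_pairs_le:
  fixes a w :: "'i \<Rightarrow> real" and b v :: "'j \<Rightarrow> real"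
  assumes "finite I" "finite J"
    and pos: "\<forall>i\<in>I. 0 < w i" "\<forall>j\<in>J. 0 < v j"
    and disjoint_I: "\<forall>i\<in>I. \<forall>i'\<in>I. arcs_meet L (a i) (w i) (a i') (w i') \<longrightarrow> i = i'"
    and disjoint_J: "\<forall>j\<in>J. \<forall>j'\<in>J. arcs_meet L (b j) (v j) (b j') (v j') \<longrightarrow> j = j'"
  shows "card {(i, j) \<in> I \<times> J. arcs_meet L (a i) (w i) (b j) (v j)} \<le> card I + card J"
proof -
  define P where "P = {(i, j) \<in> I \<times> J. arcs_meet L (a i) (w i) (b j) (v j)}"
  define starts_in where
    "starts_in i j \<longleftrightarrow> eventually (in_open_arc L (b j) (v j)) (at_right (a i))" for i j
  define f where "f = (\<lambda>(i, j). if starts_in i j then Inl i else Inr j)"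
  have "inj_on f P"
  proof (intro inj_onI, clarify)
    fix i j i' j'
    assume ij: "(i, j) \<in> P" and ij': "(i', j') \<in> P" and "f (i, j) = f (i', j')"
    show "i = i' \<and> j = j'"
    proof (cases "starts_in i j")
      case True
      with \<open>f (i, j) = f (i', j')\<close> have "i' = i" "starts_in i j'"
        by (auto simp: f_def split: if_splits)
      have "arcs_meet L (b j) (v j) (b j') (v j')"
        using True \<open>starts_in i j'\<close> unfolding starts_in_def
        by (rule arcs_meet_if_eventually_at_right)
      with \<open>i' = i\<close> ij ij' disjoint_J show ?thesis
        by (auto simp: P_def)
    next
      case False
      with \<open>f (i, j) = f (i', j')\<close> have "j' = j" "\<not> starts_in i' j"
        by (auto simp: f_def split: if_splits)
      with False ij ij' pos
      have "eventually (in_open_arc L (a i) (w i)) (at_right (b j))"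
        and "eventually (in_open_arc L (a i') (w i')) (at_right (b j))"
        using arcs_meet_imp_eventually_at_right_start unfolding P_def starts_in_def by fastforce+
      then have "arcs_meet L (a i) (w i) (a i') (w i')"
        by (rule arcs_meet_if_eventually_at_right)
      with \<open>j' = j\<close> ij ij' disjoint_I show ?thesis
        by (auto simp: P_def)
    qed
  qed
  moreover have "f ` P \<subseteq> I <+> J"
    by (auto simp: f_def P_def)
  ultimately have "card P \<le> card (I <+> J)"
    using assms(1,2) by (intro card_inj_on_le) auto
  then show ?thesis
    using assms(1,2) by (simp add: P_def card_Plus)
qed

lemma Inl_in_Kpq_V [simp]: "Inl i \<in> Kpq_V p q \<longleftrightarrow> i < p"
  and Inr_in_Kpq_V [simp]: "Inr j \<in> Kpq_V p q \<longleftrightarrow> j < q"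
  by (auto simp: Kpq_V_def)

lemma card_Kpq_meeting_arc_pairs_le:
  assumes pos: "\<forall>v\<in>Kpq_V p q. 0 < d v"
    and meet_adj: "\<forall>u\<in>Kpq_V p q. \<forall>v\<in>Kpq_V p q.
      arcs_meet L (c u) (d u) (c v) (d v) \<longrightarrow> u = v \<or> Kpq_E u v"
  shows "card {(i, j) \<in> {..<p} \<times> {..<q}.
    arcs_meet L (c (Inl i)) (d (Inl i)) (c (Inr j)) (d (Inr j))} \<le> p + q"
proof -
  have "card {(i, j) \<in> {..<p} \<times> {..<q}.
      arcs_meet L (c (Inl i)) (d (Inl i)) (c (Inr j)) (d (Inr j))} \<le> card {..<p} + card {..<q}"
  proof (rule card_meeting_arc_pairs_le)
    show "\<forall>i\<in>{..<p}. \<forall>i'\<in>{..<p}.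
        arcs_meet L (c (Inl i)) (d (Inl i)) (c (Inl i')) (d (Inl i')) \<longrightarrow> i = i'"
      using meet_adj by (fastforce simp: Kpq_E_def)
    show "\<forall>j\<in>{..<q}. \<forall>j'\<in>{..<q}.
        arcs_meet L (c (Inr j)) (d (Inr j)) (c (Inr j')) (d (Inr j')) \<longrightarrow> j = j'"
      using meet_adj by (fastforce simp: Kpq_E_def)
  qed (use pos in auto)
  then show ?thesis
    by simp
qed

lemma TRVG_Kpq_imp_mult_le:
  assumes "TRVG (Kpq_V p q) Kpq_E"
  shows "p * q \<le> 2 * (p + q)"
proof -
  let ?V = "Kpq_V p q"
  obtain W H R where valid: "\<forall>v\<in>?V. valid_trect W H (R v)"
    and adj: "\<forall>u\<in>?V. \<forall>v\<in>?V. u \<noteq> v \<longrightarrow> (Kpq_E u v \<longleftrightarrow> sees W H (R u) (R v))"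
    using assms unfolding TRVG_def by blast
  define x w y h where "x v = fst (R v)" and "w v = fst (snd (R v))"
    and "y v = fst (snd (snd (R v)))" and "h v = snd (snd (snd (R v)))" for v
  have R_eq: "R v = (x v, w v, y v, h v)" for v
    by (simp add: x_def w_def y_def h_def)
  have adj_arcs: "Kpq_E u v \<longleftrightarrow>
      arcs_meet W (x u) (w u) (x v) (w v) \<or> arcs_meet H (y u) (h u) (y v) (h v)"
    if "u \<in> ?V" "v \<in> ?V" "u \<noteq> v" for u v
    using adj that sees_iff_arcs_meet by (metis R_eq)
  have pos: "\<forall>v\<in>?V. 0 < w v" "\<forall>v\<in>?V. 0 < h v"
    using valid by (simp_all add: R_eq valid_trect_def)
  define X where "X = {(i, j) \<in> {..<p} \<times> {..<q}.
      arcs_meet W (x (Inl i)) (w (Inl i)) (x (Inr j)) (w (Inr j))}"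
  define Y where "Y = {(i, j) \<in> {..<p} \<times> {..<q}.
      arcs_meet H (y (Inl i)) (h (Inl i)) (y (Inr j)) (h (Inr j))}"
  have "X \<union> Y \<subseteq> {..<p} \<times> {..<q}"
    by (auto simp: X_def Y_def)
  moreover have "{..<p} \<times> {..<q} \<subseteq> X \<union> Y"
  proof (rule subrelI)
    fix i j assume "(i, j) \<in> {..<p} \<times> {..<q}"
    with adj_arcs[of "Inl i" "Inr j"] show "(i, j) \<in> X \<union> Y"
      by (simp add: X_def Y_def Kpq_E_def)
  qed
  ultimately have "p * q = card (X \<union> Y)"
    by (metis card_cartesian_product card_lessThan subset_antisym)
  also have "\<dots> \<le> card X + card Y"
    by (rule card_Un_le)
  also have "\<dots> \<le> (p + q) + (p + q)"
    unfolding X_def Y_def using adj_arcs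
    by (intro add_mono card_Kpq_meeting_arc_pairs_le pos; blast)
  finally show ?thesis
    by simp
qed

lemma mult_le_twice_add_cases:
  fixes p q :: nat
  assumes "p \<le> q" "p * q \<le> 2 * (p + q)"
  shows "p \<le> 2 \<or> (p, q) \<in> {(3,3), (3,4), (3,5), (3,6), (4,4)}"
proof -
  have "p < 5"
  proof (rule ccontr)
    assume "\<not> p < 5"
    then have "5 * q \<le> p * q"
      by simp
    also have "\<dots> \<le> 2 * (p + q)"
      by (fact assms(2))
    finally show False
      using assms(1) \<open>\<not> p < 5\<close> by presburger
  qed
  then consider "p \<le> 2" | "p = 3" | "p = 4"
    by linarith
  then show ?thesis
    using assms by cases auto
qed

lemma TRVG_subset:
  assumes "TRVG V E" "V' \<subseteq> V"
  shows "TRVG V' E"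
proof -
  obtain W H R where "0 < W" "0 < H" "\<forall>v\<in>V. valid_trect W H (R v)"
    "\<forall>u\<in>V. \<forall>v\<in>V. u \<noteq> v \<longrightarrow> non_overlapping W H (R u) (R v)"
    "\<forall>u\<in>V. \<forall>v\<in>V. u \<noteq> v \<longrightarrow> (E u v \<longleftrightarrow> sees W H (R u) (R v))"
    using assms(1) unfolding TRVG_def by blast
  with assms(2) show ?thesis
    unfolding TRVG_def by blast
qed

definition int_arcs_meet :: "int \<Rightarrow> int \<Rightarrow> int \<Rightarrow> int \<Rightarrow> int \<Rightarrow> bool" where
  "int_arcs_meet L a w b v \<longleftrightarrow> (\<exists>k \<in> {-1, 0, 1}. a < b + k * L + v \<and> b + k * L < a + w)"

lemma arcs_meet_of_int_iff:
  fixes L a w b v :: int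
  assumes "0 \<le> a" "a < L" "0 \<le> b" "b < L" "0 < w" "w \<le> L" "0 < v" "v \<le> L"
  shows "arcs_meet (of_int L) (of_int a) (of_int w) (of_int b) (of_int v) \<longleftrightarrow>
    int_arcs_meet L a w b v"
proof -
  have "arcs_meet (of_int L) (of_int a) (of_int w) (of_int b) (of_int v) \<longleftrightarrow>
      (\<exists>k::int. a < b + k * L + v \<and> b + k * L < a + w)"
    using assms by (simp add: arcs_meet_iff_shift of_int_less_iff flip: of_int_mult of_int_add)
  also have "\<dots> \<longleftrightarrow> int_arcs_meet L a w b v"
  proof
    assume "\<exists>k. a < b + k * L + v \<and> b + k * L < a + w"
    then obtain k where k: "a < b + k * L + v" "b + k * L < a + w"
      by blast
    have "k \<le> 1"
    proof (rule ccontr)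
      assume "\<not> k \<le> 1"
      then have "2 * L \<le> k * L"
        using assms by (intro mult_right_mono) auto
      with k assms show False
        by linarith
    qed
    moreover have "-1 \<le> k"
    proof (rule ccontr)
      assume "\<not> -1 \<le> k"
      then have "k * L \<le> -2 * L"
        using assms by (intro mult_right_mono) auto
      with k assms show False
        by linarith
    qed
    ultimately have "k \<in> {-1, 0, 1}"
      by auto
    with k show "int_arcs_meet L a w b v"
      unfolding int_arcs_meet_def by blast
  qed (unfold int_arcs_meet_def, blast)
  finally show ?thesis .
qed

fun of_int_trect :: "int \<times> int \<times> int \<times> int \<Rightarrow> trect" where
  "of_int_trect (x, w, y, h) = (of_int x, of_int w, of_int y, of_int h)"

fun int_trect_in_box :: "int \<Rightarrow> int \<Rightarrow> int \<times> int \<times> int \<times> int \<Rightarrow> bool" where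
  "int_trect_in_box W H (x, w, y, h) \<longleftrightarrow>
     0 \<le> x \<and> x < W \<and> 0 < w \<and> w < W \<and> 0 \<le> y \<and> y < H \<and> 0 < h \<and> h < H"

fun int_sees :: "int \<Rightarrow> int \<Rightarrow> int \<times> int \<times> int \<times> int \<Rightarrow> int \<times> int \<times> int \<times> int \<Rightarrow> bool" where
  "int_sees W H (x, w, y, h) (x', w', y', h') \<longleftrightarrow>
     int_arcs_meet W x w x' w' \<or> int_arcs_meet H y h y' h'"

fun int_overlap :: "int \<Rightarrow> int \<Rightarrow> int \<times> int \<times> int \<times> int \<Rightarrow> int \<times> int \<times> int \<times> int \<Rightarrow> bool" where
  "int_overlap W H (x, w, y, h) (x', w', y', h') \<longleftrightarrow>
     int_arcs_meet W x w x' w' \<and> int_arcs_meet H y h y' h'"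

lemma valid_of_int_trect:
  "int_trect_in_box W H r \<Longrightarrow> valid_trect (of_int W) (of_int H) (of_int_trect r)"
  by (cases r) (simp add: valid_trect_def)

lemma sees_of_int_trect_iff:
  assumes "int_trect_in_box W H r" "int_trect_in_box W H s"
  shows "sees (of_int W) (of_int H) (of_int_trect r) (of_int_trect s) \<longleftrightarrow> int_sees W H r s"
  using assms by (cases r; cases s) (simp add: sees_iff_arcs_meet arcs_meet_of_int_iff)

lemma non_overlapping_of_int_trect_iff:
  assumes "int_trect_in_box W H r" "int_trect_in_box W H s"
  shows "non_overlapping (of_int W) (of_int H) (of_int_trect r) (of_int_trect s) \<longleftrightarrow>
    \<not> int_overlap W H r s"
  using assms
  by (cases r; cases s) (simp add: non_overlapping_iff_arcs_meet arcs_meet_of_int_iff)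

lemma TRVG_of_int_trects:
  fixes R :: "'a \<Rightarrow> int \<times> int \<times> int \<times> int"
  assumes "0 < W" "0 < H"
    and box: "\<forall>v\<in>V. int_trect_in_box W H (R v)"
    and rep: "\<forall>u\<in>V. \<forall>v\<in>V. u \<noteq> v \<longrightarrow>
      \<not> int_overlap W H (R u) (R v) \<and> (E u v \<longleftrightarrow> int_sees W H (R u) (R v))"
  shows "TRVG V E"
  unfolding TRVG_def
proof (intro exI conjI)
  show "0 < real_of_int W" "0 < real_of_int H"
    using assms(1,2) by simp_all
  show "\<forall>v\<in>V. valid_trect (of_int W) (of_int H) (of_int_trect (R v))"
    using box valid_of_int_trect by blast
  show "\<forall>u\<in>V. \<forall>v\<in>V. u \<noteq> v \<longrightarrow>
      non_overlapping (of_int W) (of_int H) (of_int_trect (R u)) (of_int_trect (R v))"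
    using box rep non_overlapping_of_int_trect_iff by blast
  show "\<forall>u\<in>V. \<forall>v\<in>V. u \<noteq> v \<longrightarrow>
      (E u v \<longleftrightarrow> sees (of_int W) (of_int H) (of_int_trect (R u)) (of_int_trect (R v)))"
    using box rep sees_of_int_trect_iff by blast
qed

text \<open>Unit squares of the second side on the diagonal; the first side is a horizontal strip
  above them and a vertical strip to their right, which see every square but not each other.\<close>
definition K2_rects :: "nat \<Rightarrow> nat + nat \<Rightarrow> int \<times> int \<times> int \<times> int" where
  "K2_rects q v = (case v of
      Inl i \<Rightarrow>
        if i = 0 then (0, 2 * int q + 1, 2 * int q + 2, 1) else (2 * int q + 2, 1, 0, 2 * int q + 1)
    | Inr j \<Rightarrow> (2 * int j + 1, 1, 2 * int j + 1, 1))"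

lemma TRVG_K2: "TRVG (Kpq_V 2 q) Kpq_E"
proof (rule TRVG_of_int_trects[where W = "2 * int q + 4" and H = "2 * int q + 4"
      and R = "K2_rects q"])
  have V: "Kpq_V 2 q = {Inl 0, Inl 1} \<union> Inr ` {..<q}"
    by (auto simp: Kpq_V_def numeral_2_eq_2 lessThan_Suc)
  show "\<forall>v\<in>Kpq_V 2 q. int_trect_in_box (2 * int q + 4) (2 * int q + 4) (K2_rects q v)"
    unfolding V by (auto simp: K2_rects_def)
  show "\<forall>u\<in>Kpq_V 2 q. \<forall>v\<in>Kpq_V 2 q. u \<noteq> v \<longrightarrow>
      \<not> int_overlap (2 * int q + 4) (2 * int q + 4) (K2_rects q u) (K2_rects q v) \<and>
      (Kpq_E u v \<longleftrightarrow> int_sees (2 * int q + 4) (2 * int q + 4) (K2_rects q u) (K2_rects q v))"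
    unfolding V by (auto simp: K2_rects_def Kpq_E_def int_arcs_meet_def)
qed simp_all

definition K36_rects :: "nat + nat \<Rightarrow> int \<times> int \<times> int \<times> int" where
  "K36_rects v = (case v of
      Inl i \<Rightarrow> ([0, 4, 8] ! i, 3, [0, 8, 4] ! i, 3)
    | Inr j \<Rightarrow> ([2, 6, 10, 1, 5, 9] ! j, [3, 3, 3, 1, 1, 1] ! j,
                 [5, 1, 9, 6, 2, 10] ! j, [1, 1, 1, 3, 3, 3] ! j))"

lemma TRVG_K36: "TRVG (Kpq_V 3 6) Kpq_E"
proof (rule TRVG_of_int_trects[where W = 12 and H = 12 and R = K36_rects])
  have V: "Kpq_V 3 6 = {Inl 0, Inl 1, Inl 2, Inr 0, Inr 1, Inr 2, Inr 3, Inr 4, Inr 5}"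
    by (auto simp: Kpq_V_def lessThan_nat_numeral)
  show "\<forall>v\<in>Kpq_V 3 6. int_trect_in_box 12 12 (K36_rects v)"
    unfolding V by (simp add: K36_rects_def)
  show "\<forall>u\<in>Kpq_V 3 6. \<forall>v\<in>Kpq_V 3 6. u \<noteq> v \<longrightarrow>
      \<not> int_overlap 12 12 (K36_rects u) (K36_rects v) \<and>
      (Kpq_E u v \<longleftrightarrow> int_sees 12 12 (K36_rects u) (K36_rects v))"
    unfolding V by (simp add: K36_rects_def Kpq_E_def int_arcs_meet_def)
qed simp_all

definition K44_rects :: "nat + nat \<Rightarrow> int \<times> int \<times> int \<times> int" where
  "K44_rects v = (case v of
      Inl i \<Rightarrow> ([0, 4, 8, 12] ! i, 3, [0, 12, 8, 4] ! i, 3)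
    | Inr j \<Rightarrow> ([2, 6, 10, 14] ! j, 3, [6, 2, 14, 10] ! j, 3))"

lemma TRVG_K44: "TRVG (Kpq_V 4 4) Kpq_E"
proof (rule TRVG_of_int_trects[where W = 16 and H = 16 and R = K44_rects])
  have V: "Kpq_V 4 4 = {Inl 0, Inl 1, Inl 2, Inl 3, Inr 0, Inr 1, Inr 2, Inr 3}"
    by (auto simp: Kpq_V_def lessThan_nat_numeral)
  show "\<forall>v\<in>Kpq_V 4 4. int_trect_in_box 16 16 (K44_rects v)"
    unfolding V by (simp add: K44_rects_def)
  show "\<forall>u\<in>Kpq_V 4 4. \<forall>v\<in>Kpq_V 4 4. u \<noteq> v \<longrightarrow>
      \<not> int_overlap 16 16 (K44_rects u) (K44_rects v) \<and>
      (Kpq_E u v \<longleftrightarrow> int_sees 16 16 (K44_rects u) (K44_rects v))"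
    unfolding V by (simp add: K44_rects_def Kpq_E_def int_arcs_meet_def)
qed simp_all

lemma Kpq_V_mono: "p' \<le> p \<Longrightarrow> q' \<le> q \<Longrightarrow> Kpq_V p' q' \<subseteq> Kpq_V p q"
  by (auto simp: Kpq_V_def)

theorem theorem5:
  fixes p q :: nat
  assumes "0 < p" and "p \<le> q"
  shows "TRVG (Kpq_V p q) Kpq_E \<longleftrightarrow>
         (p \<le> 2 \<or> (p, q) \<in> {(3,3), (3,4), (3,5), (3,6), (4,4)})"
proof
  assume "TRVG (Kpq_V p q) Kpq_E"
  then show "p \<le> 2 \<or> (p, q) \<in> {(3,3), (3,4), (3,5), (3,6), (4,4)}"
    using assms(2) by (intro mult_le_twice_add_cases TRVG_Kpq_imp_mult_le)
next
  assume "p \<le> 2 \<or> (p, q) \<in> {(3,3), (3,4), (3,5), (3,6), (4,4)}"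
  then consider "p \<le> 2" | "p = 3" "q \<le> 6" | "p = 4" "q = 4"
    by auto
  then show "TRVG (Kpq_V p q) Kpq_E"
  proof cases
    case 1
    then show ?thesis
      using TRVG_subset[OF TRVG_K2 Kpq_V_mono] by blast
  next
    case 2
    then show ?thesis
      using TRVG_subset[OF TRVG_K36 Kpq_V_mono] by blast
  next
    case 3
    then show ?thesis
      using TRVG_K44 by simp
  qed
qed

end
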